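(* Let $U$ be an infinite uniquely $2$-divisible group, $\nu$ an involutory almost regular automorphism of $U$, and $S=\{x\in U\mid x^\nu=x^{-1}\}$. Let $D$ be an abelian subgroup of $U$ (possibly $D=1$) which is inverted by $\nu$ and such that $C_U(D)$ is infinite, and assume $(S\cap C_U(D))\setminus D\neq\emptyset$. Then: (1) there exists an element $w\in C_U(D)\setminus D$ which is inverted by $\nu$ and such that $C_U(\langle D,w\rangle)$ is infinite; (2) there exists an infinite abelian subgroup of $U$ which is inverted by $\nu$.
   Context: An automorphism $\nu$ is involutory if $\nu\ne\mathrm{id}$ and $\nu^2=\mathrm{id}$, and almost regular if $C_U(\nu)$ is finite. A group is uniquely $2$-divisible if every element has a unique square root. A subgroup is inverted by $\nu$ if each of its elements $x$ satisfies $x^\nu=x^{-1}$. *)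

theory Defs
  imports "HOL-Algebra.Algebra"
begin

definition grp_centralizer :: "('a, 'b) monoid_scheme \<Rightarrow> 'a set \<Rightarrow> 'a set" where
  "grp_centralizer G S = {x \<in> carrier G. \<forall>y\<in>S. monoid.mult G x y = monoid.mult G y x}"

definition fixed_points :: "('a, 'b) monoid_scheme \<Rightarrow> ('a \<Rightarrow> 'a) \<Rightarrow> 'a set" where
  "fixed_points G \<nu> = {x \<in> carrier G. \<nu> x = x}"

definition involutory_aut :: "('a, 'b) monoid_scheme \<Rightarrow> ('a \<Rightarrow> 'a) \<Rightarrow> bool" where
  "involutory_aut G \<nu> \<longleftrightarrow> \<nu> \<in> iso G G \<and> (\<exists>x\<in>carrier G. \<nu> x \<noteq> x)
     \<and> (\<forall>x\<in>carrier G. \<nu> (\<nu> x) = x)"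

definition almost_regular :: "('a, 'b) monoid_scheme \<Rightarrow> ('a \<Rightarrow> 'a) \<Rightarrow> bool" where
  "almost_regular G \<nu> \<longleftrightarrow> finite (fixed_points G \<nu>)"

definition uniquely_2_divisible :: "('a, 'b) monoid_scheme \<Rightarrow> bool" where
  "uniquely_2_divisible G \<longleftrightarrow> (\<forall>x\<in>carrier G. \<exists>!y. y \<in> carrier G \<and> monoid.mult G y y = x)"

definition inverted_by :: "('a, 'b) monoid_scheme \<Rightarrow> ('a \<Rightarrow> 'a) \<Rightarrow> 'a set \<Rightarrow> bool" where
  "inverted_by G \<nu> H \<longleftrightarrow> (\<forall>x\<in>H. \<nu> x = m_inv G x)"

definition abelian_set :: "('a, 'b) monoid_scheme \<Rightarrow> 'a set \<Rightarrow> bool" where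
  "abelian_set G H \<longleftrightarrow> (\<forall>x\<in>H. \<forall>y\<in>H. monoid.mult G x y = monoid.mult G y x)"

end

theory Submission
  imports Defs
begin

(*
  Let U be uniquely 2-divisible with an involutory automorphism nu whose fixed-point set F is
  finite, and write S for the set of elements inverted by nu.  The proof rests on three facts.

  (i)  Every g in the centralizer C(W) of a nu-inverted set W factors as g = c s with c in F and
       s in S \<inter> C(W): take s = q^-1 for the square root q of g^-1 g^nu.  Hence S \<inter> C(W)
       is infinite whenever C(W) is.
  (ii) For a finite inverted set D with C(D) infinite, choose u in C(D) outside the
       finite set F D.  By pigeonhole, one c in F serves for infinitely many products u y
       (y in S \<inter> C(D)), so a = c^-1 u satisfies a y in S for all y in an infinite set Y.
       Then a^nu = y^-1 a^-1 y for every y in Y, so the elements y0 y^-1 commute with a.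
       Conjugating by the square root r of y0 gives an inverted w = r^-1 a r in C(D) - D
       centralized by the infinitely many elements r^-1 y0 y^-1 r.  For infinite D the witness
       comes directly from the hypothesis S \<inter> C(D) - D \<noteq> {}.
  (iii) If every abelian inverted subgroup were finite, iterating (ii) from D = 1 would give a
       strictly increasing chain of them, whose union generates an infinite one.
*)

lemma infinite_Union_strict_chain:
  fixes F :: "nat \<Rightarrow> 'a set"
  assumes "\<And>n. F n \<subset> F (Suc n)"
  shows "infinite (\<Union>n. F n)"
proof
  assume fin: "finite (\<Union>n. F n)"
  have "inj F" using assms by (intro strict_mono_imp_inj_on) (simp add: strict_mono_Suc_iff)
  moreover have "range F \<subseteq> Pow (\<Union>n. F n)" by auto
  ultimately have "finite (UNIV :: nat set)"
    using fin finite_subset[of "range F"] finite_imageD[of F UNIV] by auto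
  then show False by simp
qed

lemma abelian_set_Union_chain:
  assumes "\<And>n. F n \<subseteq> F (Suc n)" "\<And>n. abelian_set G (F n)"
  shows "abelian_set G (\<Union>n. F n)"
  unfolding abelian_set_def
proof (intro ballI)
  fix x y assume "x \<in> (\<Union>n. F n)" "y \<in> (\<Union>n. F n)"
  then obtain i j where "x \<in> F i" "y \<in> F j" by blast
  then have "x \<in> F (max i j)" "y \<in> F (max i j)"
    using lift_Suc_mono_le[of F, OF assms(1)] by (meson max.cobounded1 max.cobounded2 subsetD)+
  then show "x \<otimes>\<^bsub>G\<^esub> y = y \<otimes>\<^bsub>G\<^esub> x" using assms(2) by (auto simp: abelian_set_def)
qed

section \<open>Centralizers and generated subgroups\<close>

context group
begin

abbreviation cen :: "'a set \<Rightarrow> 'a set" where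
  "cen \<equiv> grp_centralizer G"

lemma mult_inv_cancel [simp]:
  "x \<in> carrier G \<Longrightarrow> y \<in> carrier G \<Longrightarrow> x \<otimes> (inv x \<otimes> y) = y"
  "x \<in> carrier G \<Longrightarrow> y \<in> carrier G \<Longrightarrow> inv x \<otimes> (x \<otimes> y) = y"
  by (simp_all flip: m_assoc)

lemma cen_iff: "x \<in> cen W \<longleftrightarrow> x \<in> carrier G \<and> (\<forall>y\<in>W. x \<otimes> y = y \<otimes> x)"
  unfolding grp_centralizer_def by simp

lemma commute_inv:
  assumes "x \<in> carrier G" "z \<in> carrier G" "x \<otimes> z = z \<otimes> x"
  shows "inv x \<otimes> z = z \<otimes> inv x"
proof -
  have "inv x \<otimes> z = inv x \<otimes> (z \<otimes> x) \<otimes> inv x" using assms(1,2) by (simp add: m_assoc)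
  also have "\<dots> = inv x \<otimes> (x \<otimes> z) \<otimes> inv x" using assms(3) by simp
  also have "\<dots> = z \<otimes> inv x" using assms(1,2) by (simp add: m_assoc flip: m_assoc[of "inv x"])
  finally show ?thesis .
qed

lemma conjugate_commute:
  assumes "r \<in> carrier G" "z \<in> carrier G" "a \<in> carrier G" "z \<otimes> a = a \<otimes> z"
  shows "(inv r \<otimes> z \<otimes> r) \<otimes> (inv r \<otimes> a \<otimes> r) = (inv r \<otimes> a \<otimes> r) \<otimes> (inv r \<otimes> z \<otimes> r)"
proof -
  have "z \<otimes> (a \<otimes> r) = a \<otimes> (z \<otimes> r)" using assms by (simp flip: m_assoc)
  then show ?thesis using assms by (simp add: m_assoc)
qed

lemma subgroup_cen:
  assumes "W \<subseteq> carrier G" shows "subgroup (cen W) G"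
proof
  show "cen W \<subseteq> carrier G" by (auto simp: cen_iff)
  show "\<one> \<in> cen W" using assms by (auto simp: cen_iff)
next
  fix x y assume x: "x \<in> cen W" and y: "y \<in> cen W"
  have "x \<otimes> y \<otimes> z = z \<otimes> (x \<otimes> y)" if "z \<in> W" for z
  proof -
    have c: "x \<in> carrier G" "y \<in> carrier G" "z \<in> carrier G"
      "x \<otimes> z = z \<otimes> x" "y \<otimes> z = z \<otimes> y" using x y that assms by (auto simp: cen_iff)
    have "x \<otimes> y \<otimes> z = x \<otimes> (z \<otimes> y)" using c by (simp add: m_assoc)
    also have "\<dots> = z \<otimes> x \<otimes> y" using c by (simp flip: m_assoc)
    finally show ?thesis using c by (simp add: m_assoc)
  qed
  then show "x \<otimes> y \<in> cen W" using x y by (auto simp: cen_iff)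
  show "inv x \<in> cen W" using x assms commute_inv by (auto simp: cen_iff)
qed

lemma cen_iff_subset: "x \<in> carrier G \<Longrightarrow> W \<subseteq> carrier G \<Longrightarrow> x \<in> cen W \<longleftrightarrow> W \<subseteq> cen {x}"
  by (auto simp: cen_iff)

lemma cen_generate: assumes "W \<subseteq> carrier G" shows "cen (generate G W) = cen W"
proof
  show "cen (generate G W) \<subseteq> cen W"
    using generate.incl[of _ W G] by (auto simp: cen_iff)
  show "cen W \<subseteq> cen (generate G W)"
  proof
    fix x assume x: "x \<in> cen W"
    then have xc: "x \<in> carrier G" by (simp add: cen_iff)
    have "W \<subseteq> cen {x}" using x xc assms cen_iff_subset by blast
    moreover have "subgroup (cen {x}) G" using subgroup_cen xc by simp
    ultimately have "generate G W \<subseteq> cen {x}" by (rule generate_subgroup_incl)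
    then show "x \<in> cen (generate G W)"
      using cen_iff_subset[OF xc subgroup.subset[OF generate_is_subgroup[OF assms]]] by simp
  qed
qed

lemma abelian_generate:
  assumes "W \<subseteq> carrier G" "abelian_set G W" shows "abelian_set G (generate G W)"
proof -
  have "W \<subseteq> cen W" using assms by (auto simp: cen_iff abelian_set_def)
  then have "generate G W \<subseteq> cen (generate G W)"
    using cen_generate[OF assms(1)] generate_subgroup_incl[OF _ subgroup_cen[OF assms(1)]] by simp
  then show ?thesis by (auto simp: cen_iff abelian_set_def)
qed

end

section \<open>Square roots in uniquely 2-divisible groups\<close>

locale uniquely_2_divisible_group = group +
  assumes unique_sqrt: "uniquely_2_divisible G"
begin

lemma sqrt_exists: "x \<in> carrier G \<Longrightarrow> \<exists>r\<in>carrier G. r \<otimes> r = x"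
  using unique_sqrt unfolding uniquely_2_divisible_def by blast

lemma sqrt_unique:
  assumes "x \<in> carrier G" "y \<in> carrier G" "x \<otimes> x = y \<otimes> y" shows "x = y"
proof -
  have "\<exists>!r. r \<in> carrier G \<and> r \<otimes> r = y \<otimes> y"
    using unique_sqrt assms(2) unfolding uniquely_2_divisible_def by simp
  then show ?thesis using assms by blast
qed

text \<open>An element commuting with r squared commutes with r, as conjugation preserves square roots.\<close>
lemma cen_sqrt:
  assumes "W \<subseteq> carrier G" "r \<in> carrier G" "r \<otimes> r \<in> cen W" shows "r \<in> cen W"
  unfolding cen_iff
proof (intro conjI ballI)
  fix d assume "d \<in> W"
  then have d: "d \<in> carrier G" "d \<otimes> (r \<otimes> r) = (r \<otimes> r) \<otimes> d" using assms by (auto simp: cen_iff)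
  have "(d \<otimes> r \<otimes> inv d) \<otimes> (d \<otimes> r \<otimes> inv d) = d \<otimes> (r \<otimes> r) \<otimes> inv d"
    using d(1) assms(2) by (simp add: m_assoc)
  also have "\<dots> = (r \<otimes> r) \<otimes> d \<otimes> inv d" by (simp only: d(2))
  also have "\<dots> = r \<otimes> r" using d assms(2) by (simp add: m_assoc)
  finally have "d \<otimes> r \<otimes> inv d = r" using sqrt_unique[of "d \<otimes> r \<otimes> inv d" r] d(1) assms(2) by simp
  then show "r \<otimes> d = d \<otimes> r" using inv_solve_right'[of r "d \<otimes> r" d] d(1) assms(2) by simp
qed (use assms in simp)

end

section \<open>Groups with an almost regular involutory automorphism\<close>

locale almost_regular_involution = uniquely_2_divisible_group +
  fixes nu :: "'a \<Rightarrow> 'a"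
  assumes nu_hom: "nu \<in> hom G G"
    and nu_nu: "\<And>x. x \<in> carrier G \<Longrightarrow> nu (nu x) = x"
    and finite_fixed: "finite (fixed_points G nu)"
begin

abbreviation inverted :: "'a set" where
  "inverted \<equiv> {x \<in> carrier G. nu x = inv x}"

lemma nu_closed [simp]: "x \<in> carrier G \<Longrightarrow> nu x \<in> carrier G"
  using nu_hom by (auto simp: hom_def)

lemma nu_mult [simp]: "x \<in> carrier G \<Longrightarrow> y \<in> carrier G \<Longrightarrow> nu (x \<otimes> y) = nu x \<otimes> nu y"
  using nu_hom by (simp add: hom_def)

lemma nu_group_hom: "group_hom G G nu"
  using nu_hom by (simp add: group_hom_def group_hom_axioms_def group_axioms)

lemma nu_one [simp]: "nu \<one> = \<one>"
  using group_hom.hom_one[OF nu_group_hom] by simp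

lemma nu_inv [simp]: "x \<in> carrier G \<Longrightarrow> nu (inv x) = inv (nu x)"
  using group_hom.hom_inv[OF nu_group_hom] by simp

lemma inverted_sqrt:
  assumes "r \<in> carrier G" "nu (r \<otimes> r) = inv (r \<otimes> r)" shows "nu r = inv r"
proof -
  have "nu r \<otimes> nu r = inv r \<otimes> inv r" using assms by (simp add: inv_mult_group)
  then show ?thesis using sqrt_unique[of "nu r" "inv r"] assms(1) by simp
qed

lemma inverted_mult:
  assumes "x \<in> inverted" "y \<in> inverted" "x \<otimes> y = y \<otimes> x" shows "x \<otimes> y \<in> inverted"
proof -
  have "nu (x \<otimes> y) = inv x \<otimes> inv y" using assms(1,2) by simp
  also have "\<dots> = inv (y \<otimes> x)" using assms(1,2) by (simp add: inv_mult_group)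
  finally show ?thesis using assms by simp
qed

text \<open>The inverted elements of an abelian subgroup form a subgroup; hence a commuting
  inverted set generates an abelian inverted subgroup.\<close>
lemma inverted_generate:
  assumes "W \<subseteq> carrier G" "abelian_set G W" "inverted_by G nu W"
  shows "inverted_by G nu (generate G W)"
proof -
  let ?H = "generate G W"
  have ab: "abelian_set G ?H" using abelian_generate assms by simp
  have "subgroup (?H \<inter> inverted) G"
  proof
    show "?H \<inter> inverted \<subseteq> carrier G" by auto
    show "\<one> \<in> ?H \<inter> inverted" by (simp add: generate.one)
    show "x \<otimes> y \<in> ?H \<inter> inverted" if "x \<in> ?H \<inter> inverted" "y \<in> ?H \<inter> inverted" for x y
      using that ab inverted_mult by (auto simp: abelian_set_def generate.eng)
    show "inv x \<in> ?H \<inter> inverted" if "x \<in> ?H \<inter> inverted" for x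
      using that by (auto simp: generate_m_inv_closed[OF assms(1)])
  qed
  moreover have "W \<subseteq> ?H \<inter> inverted"
    using assms(1,3) generate.incl[of _ W G] by (auto simp: inverted_by_def)
  ultimately have "?H \<subseteq> inverted" using generate_subgroup_incl by blast
  then show ?thesis by (auto simp: inverted_by_def)
qed

lemma nu_cen:
  assumes "W \<subseteq> carrier G" "inverted_by G nu W" "x \<in> cen W" shows "nu x \<in> cen W"
  unfolding cen_iff
proof (intro conjI ballI)
  fix d assume "d \<in> W"
  then have c: "x \<in> carrier G" "d \<in> carrier G" "x \<otimes> d = d \<otimes> x" "nu d = inv d"
    using assms by (auto simp: cen_iff inverted_by_def)
  then have "nu x \<otimes> inv d = inv d \<otimes> nu x" by (metis nu_mult)
  then show "nu x \<otimes> d = d \<otimes> nu x" using commute_inv[of "inv d" "nu x"] c by simp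
qed (use assms in \<open>simp add: cen_iff\<close>)

lemma fixed_times_inverted:
  assumes "W \<subseteq> carrier G" "inverted_by G nu W" "g \<in> cen W"
  shows "\<exists>c\<in>fixed_points G nu. inv c \<otimes> g \<in> inverted \<inter> cen W"
proof -
  interpret C: subgroup "cen W" G using subgroup_cen assms(1) .
  \<comment> \<open>The inverted factor is the inverse of the square root q of g^-1 g^nu.\<close>
  have g: "g \<in> carrier G" using assms(3) by (simp add: cen_iff)
  have "inv g \<otimes> nu g \<in> cen W" using assms nu_cen by simp
  then obtain q where q: "q \<in> carrier G" "q \<otimes> q = inv g \<otimes> nu g"
    using sqrt_exists g by (meson inv_closed m_closed nu_closed)
  have "nu (q \<otimes> q) = inv (q \<otimes> q)" using q g nu_nu by (simp add: inv_mult_group)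
  then have q_inv: "nu q = inv q" using inverted_sqrt q(1) by blast
  have q_cen: "q \<in> cen W" using cen_sqrt q assms(1) \<open>inv g \<otimes> nu g \<in> cen W\<close> by simp
  have gqq: "g \<otimes> (q \<otimes> q) = nu g" using q g by simp
  have "nu (g \<otimes> q) = nu g \<otimes> inv q" using q g q_inv by simp
  also have "\<dots> = g \<otimes> q" using q g by (simp flip: gqq add: m_assoc)
  finally have "nu (g \<otimes> q) = g \<otimes> q" .
  then have "g \<otimes> q \<in> fixed_points G nu" using q g by (simp add: fixed_points_def)
  moreover have "inv (g \<otimes> q) \<otimes> g = inv q" using q g by (simp add: inv_mult_group m_assoc)
  moreover have "inv q \<in> inverted \<inter> cen W" using q q_inv q_cen by simp
  ultimately show ?thesis by (intro bexI[of _ "g \<otimes> q"]) simp_all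
qed

text \<open>By fact (i), the centralizer of an inverted set is covered by the finitely many
  translates of its inverted part, which is therefore infinite when the centralizer is.\<close>
lemma infinite_inverted_cen:
  assumes "W \<subseteq> carrier G" "inverted_by G nu W" "infinite (cen W)"
  shows "infinite (inverted \<inter> cen W)"
proof
  assume fin: "finite (inverted \<inter> cen W)"
  have "cen W \<subseteq> (\<lambda>(c, s). c \<otimes> s) ` (fixed_points G nu \<times> (inverted \<inter> cen W))"
  proof
    fix g assume g: "g \<in> cen W"
    then obtain c where c: "c \<in> fixed_points G nu" "inv c \<otimes> g \<in> inverted \<inter> cen W"
      using fixed_times_inverted assms(1,2) by blast
    have "g = c \<otimes> (inv c \<otimes> g)" using c(1) g by (simp add: fixed_points_def cen_iff)
    then show "g \<in> (\<lambda>(c, s). c \<otimes> s) ` (fixed_points G nu \<times> (inverted \<inter> cen W))"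
      using c by force
  qed
  moreover have "finite ((\<lambda>(c, s). c \<otimes> s) ` (fixed_points G nu \<times> (inverted \<inter> cen W)))"
    using fin finite_fixed by simp
  ultimately show False using assms(3) finite_subset by blast
qed

text \<open>The pigeonhole step of fact (ii): outside any finite set B there is an element a of the
  centralizer that becomes inverted after multiplication by infinitely many inverted elements
  of the centralizer.\<close>
lemma twisted_element:
  assumes "W \<subseteq> carrier G" "inverted_by G nu W" "infinite (cen W)" "finite B"
  shows "\<exists>a\<in>cen W - B. infinite {y \<in> inverted \<inter> cen W. a \<otimes> y \<in> inverted}"
proof -
  interpret C: subgroup "cen W" G using subgroup_cen assms(1) .
  let ?F = "fixed_points G nu" and ?S = "inverted \<inter> cen W"
  have "finite ((\<lambda>(c, b). c \<otimes> b) ` (?F \<times> B))" using finite_fixed assms(4) by simp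
  then have "\<not> cen W \<subseteq> (\<lambda>(c, b). c \<otimes> b) ` (?F \<times> B)" using assms(3) finite_subset by blast
  then obtain u where u: "u \<in> cen W" "u \<notin> (\<lambda>(c, b). c \<otimes> b) ` (?F \<times> B)" by blast
  have "\<forall>g\<in>cen W. \<exists>c. c \<in> ?F \<and> inv c \<otimes> g \<in> ?S"
    using fixed_times_inverted assms(1,2) by blast
  from bchoice[OF this] obtain cf where "\<forall>g\<in>cen W. cf g \<in> ?F \<and> inv (cf g) \<otimes> g \<in> ?S" ..
  then have cf: "\<And>g. g \<in> cen W \<Longrightarrow> cf g \<in> ?F \<and> inv (cf g) \<otimes> g \<in> ?S" by blast
  have "(\<lambda>y. cf (u \<otimes> y)) ` ?S \<subseteq> ?F" using cf u(1) by auto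
  then have "finite ((\<lambda>y. cf (u \<otimes> y)) ` ?S)" using finite_fixed finite_subset by blast
  then obtain y0 where y0: "y0 \<in> ?S" and inf: "infinite {y \<in> ?S. cf (u \<otimes> y) = cf (u \<otimes> y0)}"
    using pigeonhole_infinite[OF infinite_inverted_cen[OF assms(1-3)]] by blast
  define c where "c = cf (u \<otimes> y0)"
  define a where "a = inv c \<otimes> u"
  have c: "c \<in> ?F" "c \<in> carrier G" using cf u(1) y0 by (auto simp: c_def fixed_points_def)
  have a_mult: "a \<otimes> y \<in> ?S" if "y \<in> ?S" "cf (u \<otimes> y) = c" for y
    using cf[of "u \<otimes> y"] that c u(1) by (simp add: a_def m_assoc)
  have "a = (a \<otimes> y0) \<otimes> inv y0" using c u(1) y0 by (simp add: a_def m_assoc)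
  moreover have "(a \<otimes> y0) \<otimes> inv y0 \<in> cen W"
    using a_mult[of y0] y0 c_def by (auto intro!: C.m_closed[OF _ C.m_inv_closed])
  ultimately have "a \<in> cen W" by simp
  moreover have "a \<notin> B"
  proof
    assume "a \<in> B"
    moreover have "u = c \<otimes> a" using c u(1) by (simp add: a_def)
    ultimately show False using u(2) c(1) by blast
  qed
  moreover have "{y \<in> ?S. cf (u \<otimes> y) = c} \<subseteq> {y \<in> ?S. a \<otimes> y \<in> inverted}" using a_mult by blast
  ultimately show ?thesis using inf finite_subset c_def by blast
qed

lemma inverted_conjugation:
  assumes "a \<in> carrier G" "y \<in> inverted" "a \<otimes> y \<in> inverted"
  shows "nu a = inv y \<otimes> inv a \<otimes> y"
proof -
  have "nu a \<otimes> inv y = inv y \<otimes> inv a" using assms by (simp add: inv_mult_group)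
  then show ?thesis using inv_solve_right'[of "inv y \<otimes> inv a" "nu a" y] assms by simp
qed

lemma quotient_commutes:
  assumes "a \<in> carrier G" "y0 \<in> inverted" "a \<otimes> y0 \<in> inverted" "y \<in> inverted" "a \<otimes> y \<in> inverted"
  shows "(y0 \<otimes> inv y) \<otimes> a = a \<otimes> (y0 \<otimes> inv y)"
proof -
  have c: "a \<in> carrier G" "y0 \<in> carrier G" "y \<in> carrier G" using assms by auto
  have e: "inv y \<otimes> inv a \<otimes> y = inv y0 \<otimes> inv a \<otimes> y0"
    using inverted_conjugation[OF assms(1,2,3)] inverted_conjugation[OF assms(1,4,5)] by simp
  have "(y0 \<otimes> inv y) \<otimes> inv a = y0 \<otimes> (inv y \<otimes> inv a \<otimes> y) \<otimes> inv y"
    using c by (simp add: m_assoc)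
  also have "\<dots> = y0 \<otimes> (inv y0 \<otimes> inv a \<otimes> y0) \<otimes> inv y"
    by (simp only: e)
  also have "\<dots> = inv a \<otimes> (y0 \<otimes> inv y)" using c by (simp add: m_assoc)
  finally show ?thesis using commute_inv[of "inv a" "y0 \<otimes> inv y"] c by simp
qed

lemma inverted_conjugate_by_sqrt:
  assumes "a \<in> carrier G" "r \<in> carrier G" "nu r = inv r"
    and "nu a = inv (r \<otimes> r) \<otimes> inv a \<otimes> (r \<otimes> r)"
  shows "nu (inv r \<otimes> a \<otimes> r) = inv (inv r \<otimes> a \<otimes> r)"
proof -
  have "nu (inv r \<otimes> a \<otimes> r) = r \<otimes> (inv (r \<otimes> r) \<otimes> inv a \<otimes> (r \<otimes> r)) \<otimes> inv r"
    using assms by simp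
  also have "\<dots> = inv r \<otimes> inv a \<otimes> r" using assms(1,2) by (simp add: m_assoc inv_mult_group)
  also have "\<dots> = inv (inv r \<otimes> a \<otimes> r)" using assms(1,2) by (simp add: m_assoc inv_mult_group)
  finally show ?thesis .
qed

text \<open>The centralizing family of fact (ii): if a y is inverted for all y in an infinite set Y of
  inverted elements of C(W), and r centralizes W, then the infinitely many conjugates
  r^-1 y0 y^-1 r (y in Y) centralize both W and the conjugate r^-1 a r.\<close>
lemma infinite_cen_conjugate:
  assumes "W \<subseteq> carrier G" "a \<in> carrier G" "r \<in> cen W" "infinite Y"
    and "Y \<subseteq> inverted \<inter> cen W" "\<And>y. y \<in> Y \<Longrightarrow> a \<otimes> y \<in> inverted" "y0 \<in> Y"
  shows "infinite (cen (W \<union> {inv r \<otimes> a \<otimes> r}))"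
proof -
  interpret C: subgroup "cen W" G using subgroup_cen assms(1) .
  have r: "r \<in> carrier G" using assms(3) by (simp add: cen_iff)
  have y0: "y0 \<in> inverted" "a \<otimes> y0 \<in> inverted" "y0 \<in> cen W" using assms(5-7) by auto
  define z where "z y = inv r \<otimes> (y0 \<otimes> inv y) \<otimes> r" for y
  have "z y \<in> cen (W \<union> {inv r \<otimes> a \<otimes> r})" if y: "y \<in> Y" for y
  proof -
    have "z y \<in> cen W" using assms(3,5) y y0 by (auto simp: z_def)
    moreover have "(y0 \<otimes> inv y) \<otimes> a = a \<otimes> (y0 \<otimes> inv y)"
      using quotient_commutes[OF assms(2) y0(1,2)] assms(5,6) y by auto
    then have "z y \<otimes> (inv r \<otimes> a \<otimes> r) = (inv r \<otimes> a \<otimes> r) \<otimes> z y"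
      using conjugate_commute[OF r _ assms(2)] y0 y assms(5) unfolding z_def by auto
    ultimately show ?thesis by (auto simp: cen_iff)
  qed
  moreover have "inj_on z Y"
  proof (rule inj_onI)
    fix y y' assume "y \<in> Y" "y' \<in> Y" "z y = z y'"
    then have yc: "y \<in> carrier G" "y' \<in> carrier G" and "z y = z y'" using assms(5) by auto
    then have "inv y = inv y'" using r y0(1) by (simp add: z_def m_assoc)
    then have "inv (inv y) = inv (inv y')" by simp
    then show "y = y'" using yc by simp
  qed
  then have "infinite (z ` Y)" using assms(4) finite_imageD by blast
  ultimately show ?thesis using finite_subset[of "z ` Y"] by blast
qed

lemma inverted_extension_finite:
  assumes "W \<subseteq> carrier G" "inverted_by G nu W" "infinite (cen W)" "finite W"
  shows "\<exists>w\<in>cen W - W. nu w = inv w \<and> infinite (cen (W \<union> {w}))"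
proof -
  interpret C: subgroup "cen W" G using subgroup_cen assms(1) .
  obtain a where a: "a \<in> cen W" "a \<notin> W"
    and Y_inf: "infinite {y \<in> inverted \<inter> cen W. a \<otimes> y \<in> inverted}" (is "infinite ?Y")
    using twisted_element assms by blast
  have ac: "a \<in> carrier G" using a(1) by (simp add: cen_iff)
  obtain y0 where "y0 \<in> ?Y" using infinite_imp_nonempty[OF Y_inf] by blast
  then have y0: "y0 \<in> inverted" "a \<otimes> y0 \<in> inverted" "y0 \<in> cen W" by auto
  obtain r where r: "r \<in> carrier G" "r \<otimes> r = y0" using sqrt_exists[of y0] y0(1) by auto
  have r_inv: "nu r = inv r" by (rule inverted_sqrt[OF r(1)]) (use r(2) y0(1) in simp)
  have r_cen: "r \<in> cen W" by (rule cen_sqrt[OF assms(1) r(1)]) (use r(2) y0(3) in simp)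
  define w where "w = inv r \<otimes> a \<otimes> r"
  have "w \<in> cen W" using a(1) r_cen by (simp add: w_def)
  moreover have "nu w = inv w"
  proof -
    have "nu a = inv y0 \<otimes> inv a \<otimes> y0" using inverted_conjugation[OF ac y0(1,2)] .
    then show ?thesis using inverted_conjugate_by_sqrt[OF ac r(1) r_inv] r(2) by (simp add: w_def)
  qed
  moreover have "w \<notin> W"
  proof
    assume "w \<in> W"
    then have "r \<otimes> w = w \<otimes> r" using r_cen by (simp add: cen_iff)
    have "a = r \<otimes> w \<otimes> inv r" using ac r(1) by (simp add: w_def m_assoc)
    also have "\<dots> = w \<otimes> r \<otimes> inv r" using \<open>r \<otimes> w = w \<otimes> r\<close> by simp
    also have "\<dots> = w" using ac r(1) by (simp add: w_def m_assoc)
    finally have "a = w" .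
    with a(2) \<open>w \<in> W\<close> show False by simp
  qed
  moreover have "infinite (cen (W \<union> {w}))"
    unfolding w_def using infinite_cen_conjugate[OF assms(1) ac r_cen Y_inf _ _ \<open>y0 \<in> ?Y\<close>] by blast
  ultimately show ?thesis by blast
qed

text \<open>Part (1) for a commuting inverted set D: for infinite D any inverted element of the
  centralizer outside D works, as D itself then lies in the new centralizer.\<close>
lemma inverted_extension:
  assumes "D \<subseteq> carrier G" "abelian_set G D" "inverted_by G nu D" "infinite (cen D)"
    and "(inverted \<inter> cen D) - D \<noteq> {}"
  shows "\<exists>w\<in>cen D - D. nu w = inv w \<and> infinite (cen (D \<union> {w}))"
proof (cases "finite D")
  case True
  then show ?thesis using inverted_extension_finite assms(1,3,4) by blast
next
  case False
  obtain s where s: "s \<in> inverted \<inter> cen D" "s \<notin> D" using assms(5) by blast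
  have "D \<subseteq> cen (D \<union> {s})" using assms(1,2) s by (auto simp: cen_iff abelian_set_def)
  then have "infinite (cen (D \<union> {s}))" using False finite_subset by blast
  then show ?thesis using s by blast
qed

definition finite_stage :: "'a set \<Rightarrow> bool" where
  "finite_stage H \<longleftrightarrow> H \<subseteq> carrier G \<and> finite H \<and> abelian_set G H \<and> inverted_by G nu H
     \<and> infinite (cen H)"

lemma finite_stage_extends:
  assumes all_finite: "\<And>A. subgroup A G \<Longrightarrow> abelian_set G A \<Longrightarrow> inverted_by G nu A \<Longrightarrow> finite A"
    and "finite_stage H"
  shows "\<exists>Y. finite_stage Y \<and> H \<subset> Y"
proof -
  have H: "H \<subseteq> carrier G" "finite H" "abelian_set G H" "inverted_by G nu H" "infinite (cen H)"
    using assms(2) by (auto simp: finite_stage_def)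
  obtain w where w: "w \<in> cen H - H" "nu w = inv w" "infinite (cen (H \<union> {w}))"
    using inverted_extension_finite H by blast
  let ?Y = "generate G (H \<union> {w})"
  have Hw: "H \<union> {w} \<subseteq> carrier G" "abelian_set G (H \<union> {w})" "inverted_by G nu (H \<union> {w})"
    using H w by (auto simp: cen_iff abelian_set_def inverted_by_def)
  have Y: "subgroup ?Y G" "abelian_set G ?Y" "inverted_by G nu ?Y"
    using generate_is_subgroup[OF Hw(1)] abelian_generate[OF Hw(1,2)] inverted_generate[OF Hw]
    by simp_all
  have "finite_stage ?Y" unfolding finite_stage_def
    using Y subgroup.subset[OF Y(1)] all_finite[OF Y] cen_generate[OF Hw(1)] w(3) by simp
  moreover have "H \<subset> ?Y" using w(1) generate.incl[of _ "H \<union> {w}" G] by blast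
  ultimately show ?thesis by blast
qed

lemma infinite_abelian_inverted_subgroup:
  assumes "infinite (carrier G)"
  shows "\<exists>A. subgroup A G \<and> abelian_set G A \<and> infinite A \<and> inverted_by G nu A"
proof (rule ccontr)
  assume "\<nexists>A. subgroup A G \<and> abelian_set G A \<and> infinite A \<and> inverted_by G nu A"
  then have all_finite: "\<And>A. subgroup A G \<Longrightarrow> abelian_set G A \<Longrightarrow> inverted_by G nu A \<Longrightarrow> finite A"
    by blast
  have "cen {\<one>} = carrier G" by (auto simp: cen_iff)
  then have "finite_stage {\<one>}"
    using assms by (simp add: finite_stage_def abelian_set_def inverted_by_def)
  then have "\<exists>F. \<forall>n. finite_stage (F n) \<and> F n \<subset> F (Suc n)"
    using finite_stage_extends[OF all_finite]
    by (intro dependent_nat_choice[where P = "\<lambda>_ H. finite_stage H"]) blast+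
  then obtain F where F: "\<And>n. finite_stage (F n)" "\<And>n. F n \<subset> F (Suc n)" by blast
  let ?U = "\<Union>n. F n"
  have U: "?U \<subseteq> carrier G" "abelian_set G ?U" "inverted_by G nu ?U"
    using F abelian_set_Union_chain[of F G]
    by (auto simp: finite_stage_def inverted_by_def psubset_imp_subset)
  have "?U \<subseteq> generate G ?U" using generate.incl[of _ ?U G] by blast
  then have "infinite (generate G ?U)" using infinite_Union_strict_chain[of F, OF F(2)] finite_subset by blast
  moreover have "finite (generate G ?U)"
    using all_finite[OF generate_is_subgroup[OF U(1)] abelian_generate[OF U(1,2)]
        inverted_generate[OF U]] .
  ultimately show False by contradiction
qed

end

theorem lemma3p1:
  fixes G :: "('a, 'b) monoid_scheme" and \<nu> :: "'a \<Rightarrow> 'a" and D :: "'a set"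
  assumes "group G"
    and "infinite (carrier G)"
    and "uniquely_2_divisible G"
    and "involutory_aut G \<nu>"
    and "almost_regular G \<nu>"
    and "subgroup D G"
    and "abelian_set G D"
    and "inverted_by G \<nu> D"
    and "infinite (grp_centralizer G D)"
    and "({x \<in> carrier G. \<nu> x = inv\<^bsub>G\<^esub> x} \<inter> grp_centralizer G D) - D \<noteq> {}"
  shows "(\<exists>w \<in> grp_centralizer G D - D. \<nu> w = inv\<^bsub>G\<^esub> w
            \<and> infinite (grp_centralizer G (generate G (D \<union> {w}))))
       \<and> (\<exists>A. subgroup A G \<and> abelian_set G A \<and> infinite A \<and> inverted_by G \<nu> A)"
proof -
  have "almost_regular_involution G \<nu>"
    unfolding almost_regular_involution_def almost_regular_involution_axioms_def
      uniquely_2_divisible_group_def uniquely_2_divisible_group_axioms_def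
    using assms(1,3-5) by (auto simp: involutory_aut_def iso_def almost_regular_def)
  then interpret almost_regular_involution G \<nu> .
  have D: "D \<subseteq> carrier G" using assms(6) subgroup.subset by blast
  obtain w where w: "w \<in> cen D - D" "\<nu> w = inv\<^bsub>G\<^esub> w" "infinite (cen (D \<union> {w}))"
    using inverted_extension[OF D assms(7-10)] by blast
  then have "infinite (cen (generate G (D \<union> {w})))"
    using cen_generate[of "D \<union> {w}"] D by (simp add: cen_iff)
  then show ?thesis using w infinite_abelian_inverted_subgroup assms(2) by blast
qed

end
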